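(* For every migration factor $M\ge 0$, every deterministic semi-online algorithm with migration factor $M$ for scheduling on two hierarchical machines, in the variant where the total size of all jobs (rather than the optimal makespan) is known in advance, has competitive ratio at least $\frac{\sqrt{33}-1}{4}\approx 1.18614$.
   Context: Model (two hierarchical machines with migration). Jobs $1,2,\dots,n$ arrive one by one ($n$ unknown in advance). Job $j$ has a size $p_j>0$ and a grade of service (GoS) $g_j\in\{1,2\}$; a job of GoS $1$ may only be processed on machine $m_1$, a job of GoS $2$ may be processed on $m_1$ or on $m_2$. The load of a machine is the total size of its jobs, the makespan is the maximum load. When job $j$ arrives, the algorithm must assign it, and may migrate previously arrived jobs (respecting GoS) of total size at most $M\cdot p_j$ (migration factor $M$). In this variant, the algorithm is told in advance the total size $\sum_j p_j$ of the whole input (but not the optimal makespan). The competitive ratio is the supremum over inputs of (algorithm's makespan)/(optimal offline makespan). *)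

theory Defs
  imports Complex_Main "HOL-Library.Extended_Real"
begin

text \<open>A job is a pair (size, GoS). An input is a list of jobs, in arrival order.
Machines are numbered 1 (= m1) and 2 (= m2). An assignment is a map from job
indices (0-based positions in the list) to machines.\<close>

type_synonym job = "real \<times> nat"

definition valid_input :: "job list \<Rightarrow> bool" where
  "valid_input xs \<longleftrightarrow> (\<forall>j\<in>set xs. fst j > 0 \<and> snd j \<in> {1, 2})"

definition total_size :: "job list \<Rightarrow> real" where
  "total_size xs = (\<Sum>j\<leftarrow>xs. fst j)"

definition feasible :: "job list \<Rightarrow> (nat \<Rightarrow> nat) \<Rightarrow> bool" where
  "feasible xs \<sigma> \<longleftrightarrow> (\<forall>i < length xs. \<sigma> i \<in> {1, 2} \<and> (snd (xs ! i) = 1 \<longrightarrow> \<sigma> i = 1))"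

definition load :: "job list \<Rightarrow> (nat \<Rightarrow> nat) \<Rightarrow> nat \<Rightarrow> real" where
  "load xs \<sigma> m = (\<Sum>i \<in> {i. i < length xs \<and> \<sigma> i = m}. fst (xs ! i))"

definition makespan :: "job list \<Rightarrow> (nat \<Rightarrow> nat) \<Rightarrow> real" where
  "makespan xs \<sigma> = max (load xs \<sigma> 1) (load xs \<sigma> 2)"

definition opt_makespan :: "job list \<Rightarrow> real" where
  "opt_makespan xs = (INF \<sigma> \<in> {\<sigma>. feasible xs \<sigma>}. makespan xs \<sigma>)"

definition migrated :: "job list \<Rightarrow> nat \<Rightarrow> (nat \<Rightarrow> nat) \<Rightarrow> (nat \<Rightarrow> nat) \<Rightarrow> real" where
  "migrated xs k \<sigma> \<tau> = (\<Sum>i \<in> {i. i < k \<and> \<sigma> i \<noteq> \<tau> i}. fst (xs ! i))"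

text \<open>A deterministic semi-online algorithm knowing the total size is a function
  A T prefix, returning the assignment of the jobs of the prefix after the last job
  of the prefix has been processed (T = total size of the whole input, given in advance).\<close>
definition semi_online_alg :: "real \<Rightarrow> (real \<Rightarrow> job list \<Rightarrow> nat \<Rightarrow> nat) \<Rightarrow> bool" where
  "semi_online_alg M A \<longleftrightarrow>
     (\<forall>xs. valid_input xs \<longrightarrow>
        (\<forall>k \<le> length xs. feasible (take k xs) (A (total_size xs) (take k xs))) \<and>
        (\<forall>k < length xs.
            migrated xs k (A (total_size xs) (take k xs)) (A (total_size xs) (take (Suc k) xs))
              \<le> M * fst (xs ! k)))"

definition alg_makespan :: "(real \<Rightarrow> job list \<Rightarrow> nat \<Rightarrow> nat) \<Rightarrow> job list \<Rightarrow> real" where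
  "alg_makespan A xs = makespan xs (A (total_size xs) xs)"

definition competitive_ratio :: "(real \<Rightarrow> job list \<Rightarrow> nat \<Rightarrow> nat) \<Rightarrow> ereal" where
  "competitive_ratio A =
     (SUP xs \<in> {xs. valid_input xs \<and> xs \<noteq> []}. ereal (alg_makespan A xs / opt_makespan xs))"

end

theory Submission
  imports Defs
begin

text \<open>The adversary releases two jobs of size 1 and GoS 2, followed by many tiny jobs of total
  size s, all of GoS 1 or all of GoS 2; the total size 2 + s is the same in both scenarios.
  The tiny jobs are so small that their migration budget can never move a big job, so the
  placement of the big jobs is fixed once the second one arrives, before the GoS of the tiny
  jobs is revealed. If the big jobs are apart, GoS-1 tiny jobs force load 1 + s on m1 while
  the optimum is 2; if they are together, the makespan is 2 while GoS-2 tiny jobs allow the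
  optimum 1 + s/2. The choice s = (sqrt 33 - 3)/2 balances both ratios at (sqrt 33 - 1)/4.\<close>

lemma valid_input_nth_pos: "valid_input xs \<Longrightarrow> i < length xs \<Longrightarrow> 0 < fst (xs ! i)"
  unfolding valid_input_def using nth_mem by blast

lemma load_nonneg: "valid_input xs \<Longrightarrow> 0 \<le> load xs \<sigma> m"
  unfolding load_def by (rule sum_nonneg) (auto dest: valid_input_nth_pos[THEN less_imp_le])

lemma sum_le_load:
  assumes "valid_input xs" "I \<subseteq> {i. i < length xs \<and> \<sigma> i = m}"
  shows "(\<Sum>i\<in>I. fst (xs ! i)) \<le> load xs \<sigma> m"
  unfolding load_def
  by (rule sum_mono2) (use assms in \<open>auto dest: valid_input_nth_pos[THEN less_imp_le]\<close>)

lemma nth_le_migrated: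
  assumes "valid_input xs" "j < k" "k \<le> length xs" "\<sigma> j \<noteq> \<tau> j"
  shows "fst (xs ! j) \<le> migrated xs k \<sigma> \<tau>"
proof -
  have "(\<Sum>i\<in>{j}. fst (xs ! i)) \<le> migrated xs k \<sigma> \<tau>"
    unfolding migrated_def
    by (rule sum_mono2)
      (use assms in \<open>fastforce intro: valid_input_nth_pos[THEN less_imp_le]\<close>)+
  then show ?thesis by simp
qed

lemma semi_online_alg_keeps_job:
  assumes alg: "semi_online_alg M A" and valid: "valid_input xs"
    and "j < k\<^sub>0" "k\<^sub>0 \<le> k" "k \<le> length xs"
    and small: "\<And>i. k\<^sub>0 \<le> i \<Longrightarrow> i < length xs \<Longrightarrow> M * fst (xs ! i) < fst (xs ! j)"
  shows "A (total_size xs) (take k xs) j = A (total_size xs) (take k\<^sub>0 xs) j"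
  using \<open>k\<^sub>0 \<le> k\<close> \<open>k \<le> length xs\<close>
proof (induction k rule: dec_induct)
  case base
  then show ?case by simp
next
  case (step n)
  let ?\<sigma> = "A (total_size xs) (take n xs)" and ?\<tau> = "A (total_size xs) (take (Suc n) xs)"
  have "migrated xs n ?\<sigma> ?\<tau> \<le> M * fst (xs ! n)"
    using alg valid step.prems unfolding semi_online_alg_def by auto
  also have "\<dots> < fst (xs ! j)"
    using small step by simp
  finally have "?\<tau> j = ?\<sigma> j"
    using nth_le_migrated[OF valid, of j n ?\<sigma> ?\<tau>] \<open>j < k\<^sub>0\<close> step by fastforce
  then show ?case using step by simp
qed

lemma opt_makespan_le_makespan:
  assumes "valid_input xs" "feasible xs \<tau>"
  shows "opt_makespan xs \<le> makespan xs \<tau>"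
  unfolding opt_makespan_def
proof (rule cINF_lower)
  show "bdd_below (makespan xs ` {\<sigma>. feasible xs \<sigma>})"
    by (rule bdd_belowI[where m = 0])
      (auto simp: makespan_def intro: max.coboundedI1 load_nonneg[OF assms(1)])
qed (use assms in auto)

lemma nth_le_opt_makespan:
  assumes "valid_input xs" "i < length xs"
  shows "fst (xs ! i) \<le> opt_makespan xs"
  unfolding opt_makespan_def
proof (rule cINF_greatest)
  have "feasible xs (\<lambda>_. 1)" by (simp add: feasible_def)
  then show "{\<sigma>. feasible xs \<sigma>} \<noteq> {}" by blast
next
  fix \<sigma> assume "\<sigma> \<in> {\<sigma>. feasible xs \<sigma>}"
  then have "\<sigma> i \<in> {1, 2}"
    using assms unfolding feasible_def by auto
  moreover have "(\<Sum>i\<in>{i}. fst (xs ! i)) \<le> load xs \<sigma> (\<sigma> i)"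
    by (rule sum_le_load) (use assms in auto)
  ultimately show "fst (xs ! i) \<le> makespan xs \<sigma>"
    unfolding makespan_def by auto
qed

lemma competitive_ratio_ge_ratio:
  assumes "valid_input xs" "xs \<noteq> []" "0 \<le> a" "a \<le> alg_makespan A xs" "opt_makespan xs \<le> b"
  shows "ereal (a / b) \<le> competitive_ratio A"
proof -
  have "0 < opt_makespan xs"
    using valid_input_nth_pos[of xs 0] nth_le_opt_makespan[of xs 0] assms by simp
  then have "a / b \<le> alg_makespan A xs / opt_makespan xs"
    using assms by (intro frac_le) auto
  also have "ereal (alg_makespan A xs / opt_makespan xs) \<le> competitive_ratio A"
    unfolding competitive_ratio_def by (rule SUP_upper) (use assms in auto)
  finally show ?thesis by simp
qed

definition adversary_input :: "nat \<Rightarrow> nat \<Rightarrow> real \<Rightarrow> job list" where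
  "adversary_input g n e = [(1, 2), (1, 2)] @ replicate (2 * n) (e, g)"

lemma length_adversary_input [simp]: "length (adversary_input g n e) = 2 + 2 * n"
  by (simp add: adversary_input_def)

lemma adversary_input_nth_big: "i < 2 \<Longrightarrow> adversary_input g n e ! i = (1, 2)"
  by (auto simp: adversary_input_def less_2_cases_iff)

lemma adversary_input_nth_tiny:
  "2 \<le> i \<Longrightarrow> i < 2 + 2 * n \<Longrightarrow> adversary_input g n e ! i = (e, g)"
  by (simp add: adversary_input_def nth_append)

lemma take_2_adversary_input: "take 2 (adversary_input g n e) = [(1, 2), (1, 2)]"
  by (simp add: adversary_input_def)

lemma total_size_adversary_input: "total_size (adversary_input g n e) = 2 + 2 * real n * e"
  by (simp add: adversary_input_def total_size_def sum_list_replicate)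

lemma valid_adversary_input: "0 < e \<Longrightarrow> g \<in> {1, 2} \<Longrightarrow> valid_input (adversary_input g n e)"
  by (auto simp: valid_input_def adversary_input_def)

lemma sum_tiny_adversary_input:
  assumes "2 \<le> a" "a \<le> b" "b \<le> 2 + 2 * n"
  shows "(\<Sum>i\<in>{a..<b}. fst (adversary_input g n e ! i)) = real (b - a) * e"
proof -
  have "(\<Sum>i\<in>{a..<b}. fst (adversary_input g n e ! i)) = (\<Sum>i\<in>{a..<b}. e)"
    using assms by (intro sum.cong) (auto simp: adversary_input_nth_tiny)
  then show ?thesis by simp
qed

lemma makespan_adversary_input_apart:
  assumes "0 < e" "feasible (adversary_input 1 n e) \<sigma>" "\<sigma> 0 \<noteq> \<sigma> 1"
  shows "1 + 2 * real n * e \<le> makespan (adversary_input 1 n e) \<sigma>"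
proof -
  let ?xs = "adversary_input 1 n e"
  have feas: "\<forall>i < 2 + 2 * n. \<sigma> i \<in> {1, 2} \<and> (snd (?xs ! i) = 1 \<longrightarrow> \<sigma> i = 1)"
    using assms(2) by (simp add: feasible_def)
  have "\<sigma> 0 = 1 \<or> \<sigma> 1 = 1"
    using feas[rule_format, of 0] feas[rule_format, of 1] assms(3) by auto
  then obtain j where j: "j < 2" "\<sigma> j = 1" by (metis Suc_1 lessI zero_less_numeral)
  have "{2..<2 + 2 * n} \<subseteq> {i. i < length ?xs \<and> \<sigma> i = 1}"
    using feas by (auto simp: adversary_input_nth_tiny)
  with j have "(\<Sum>i\<in>insert j {2..<2 + 2 * n}. fst (?xs ! i)) \<le> load ?xs \<sigma> 1"
    by (intro sum_le_load valid_adversary_input assms(1)) auto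
  moreover have "(\<Sum>i\<in>insert j {2..<2 + 2 * n}. fst (?xs ! i)) = 1 + 2 * real n * e"
    using j sum_tiny_adversary_input[of 2 "2 + 2 * n" n 1 e]
    by (simp add: adversary_input_nth_big)
  ultimately show ?thesis unfolding makespan_def by linarith
qed

lemma opt_makespan_adversary_input_apart:
  fixes e :: real
  assumes "0 < e" "n * e \<le> 1"
  shows "opt_makespan (adversary_input 1 n e) \<le> 2"
proof -
  let ?xs = "adversary_input 1 n e"
  define \<tau> :: "nat \<Rightarrow> nat" where "\<tau> i = (if i < 2 then 2 else 1)" for i
  have "feasible ?xs \<tau>"
    by (auto simp: feasible_def \<tau>_def adversary_input_nth_big)
  moreover have "{i. i < length ?xs \<and> \<tau> i = 1} = {2..<2 + 2 * n}"
    and "{i. i < length ?xs \<and> \<tau> i = 2} = {0, 1}"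
    by (auto simp: \<tau>_def)
  then have "load ?xs \<tau> 1 = 2 * real n * e" and "load ?xs \<tau> 2 = 2"
    using sum_tiny_adversary_input[of 2 "2 + 2 * n" n 1 e]
    by (simp_all add: load_def adversary_input_nth_big)
  ultimately show ?thesis
    using opt_makespan_le_makespan[OF valid_adversary_input] assms
    by (fastforce simp: makespan_def)
qed

lemma makespan_adversary_input_together:
  assumes "0 < e" "g \<in> {1, 2}" "feasible (adversary_input g n e) \<sigma>" "\<sigma> 0 = \<sigma> 1"
  shows "2 \<le> makespan (adversary_input g n e) \<sigma>"
proof -
  let ?xs = "adversary_input g n e"
  have "\<sigma> 0 \<in> {1, 2}"
    using assms(3) by (simp add: feasible_def)
  moreover have "(\<Sum>i\<in>{0, 1}. fst (?xs ! i)) \<le> load ?xs \<sigma> (\<sigma> 0)"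
    using assms by (intro sum_le_load valid_adversary_input) auto
  ultimately show ?thesis
    by (auto simp: makespan_def adversary_input_nth_big)
qed

lemma opt_makespan_adversary_input_together:
  fixes e :: real
  assumes "0 < e"
  shows "opt_makespan (adversary_input 2 n e) \<le> 1 + n * e"
proof -
  let ?xs = "adversary_input 2 n e"
  define \<tau> :: "nat \<Rightarrow> nat" where "\<tau> i = (if i = 1 \<or> 2 + n \<le> i then 2 else 1)" for i
  have "feasible ?xs \<tau>"
    by (auto simp: feasible_def \<tau>_def adversary_input_def nth_append)
  moreover have "{i. i < length ?xs \<and> \<tau> i = 1} = insert 0 {2..<2 + n}"
    and "{i. i < length ?xs \<and> \<tau> i = 2} = insert 1 {2 + n..<2 + 2 * n}"
    by (auto simp: \<tau>_def)
  then have "load ?xs \<tau> 1 = 1 + n * e" and "load ?xs \<tau> 2 = 1 + n * e"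
    using sum_tiny_adversary_input[of 2 "2 + n" n 2 e]
      sum_tiny_adversary_input[of "2 + n" "2 + 2 * n" n 2 e]
    by (simp_all add: load_def adversary_input_nth_big)
  ultimately show ?thesis
    using opt_makespan_le_makespan[OF valid_adversary_input] assms
    by (fastforce simp: makespan_def)
qed

lemma competitive_ratio_ge_min:
  fixes n :: nat and e :: real
  assumes alg: "semi_online_alg M A" and "0 < e" "M * e < 1" "n * e \<le> 1"
  shows "ereal (min ((1 + 2 * real n * e) / 2) (2 / (1 + n * e))) \<le> competitive_ratio A"
proof -
  let ?xs = "\<lambda>g. adversary_input g n e" and ?T = "2 + 2 * real n * e"
  define \<sigma>\<^sub>0 where "\<sigma>\<^sub>0 = A ?T [(1, 2), (1, 2)]"
  have valid: "valid_input (?xs g)" if "g \<in> {1, 2}" for g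
    using valid_adversary_input \<open>0 < e\<close> that .
  have nonempty: "?xs g \<noteq> []" for g
    by (simp add: adversary_input_def)
  have feasible: "feasible (?xs g) (A ?T (?xs g))" if "g \<in> {1, 2}" for g
  proof -
    have "feasible (take (length (?xs g)) (?xs g))
        (A (total_size (?xs g)) (take (length (?xs g)) (?xs g)))"
      using alg valid[OF that] unfolding semi_online_alg_def by blast
    then show ?thesis by (simp add: total_size_adversary_input)
  qed
  have final: "A ?T (?xs g) j = \<sigma>\<^sub>0 j" if "g \<in> {1, 2}" "j < 2" for g j
  proof -
    have "A (total_size (?xs g)) (take (2 + 2 * n) (?xs g)) j
        = A (total_size (?xs g)) (take 2 (?xs g)) j"
      by (rule semi_online_alg_keeps_job[OF alg valid[OF that(1)]])
        (use that \<open>M * e < 1\<close> in \<open>auto simp: adversary_input_nth_big adversary_input_nth_tiny\<close>)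
    then show ?thesis
      by (simp add: total_size_adversary_input take_2_adversary_input \<sigma>\<^sub>0_def)
  qed
  show ?thesis
  proof (cases "\<sigma>\<^sub>0 0 = \<sigma>\<^sub>0 1")
    case False
    then have "A ?T (?xs 1) 0 \<noteq> A ?T (?xs 1) 1"
      using final[of 1] by simp
    then have alg: "1 + 2 * real n * e \<le> alg_makespan A (?xs 1)"
      using makespan_adversary_input_apart[OF \<open>0 < e\<close> feasible[of 1]]
      by (simp add: alg_makespan_def total_size_adversary_input)
    have "ereal ((1 + 2 * real n * e) / 2) \<le> competitive_ratio A"
      by (rule competitive_ratio_ge_ratio[OF valid nonempty, of 1])
        (use alg opt_makespan_adversary_input_apart assms in auto)
    then show ?thesis by (meson min.cobounded1 ereal_less_eq(3) order_trans)
  next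
    case True
    then have "A ?T (?xs 2) 0 = A ?T (?xs 2) 1"
      using final[of 2] by simp
    then have alg: "2 \<le> alg_makespan A (?xs 2)"
      using makespan_adversary_input_together[OF \<open>0 < e\<close> _ feasible[of 2]]
      by (simp add: alg_makespan_def total_size_adversary_input)
    have "ereal (2 / (1 + n * e)) \<le> competitive_ratio A"
      by (rule competitive_ratio_ge_ratio[OF valid nonempty, of 2])
        (use alg opt_makespan_adversary_input_together assms in auto)
    then show ?thesis by (meson min.cobounded2 ereal_less_eq(3) order_trans)
  qed
qed

lemma sqrt_33_balance:
  assumes "s = (sqrt 33 - 3) / 2"
  shows "(1 + s) / 2 = (sqrt 33 - 1) / 4" and "2 / (1 + s / 2) = (sqrt 33 - 1) / 4"
proof -
  have "3 < sqrt 33" by (rule real_less_rsqrt) simp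
  moreover have "(1 + sqrt 33) * (sqrt 33 - 1) = 32" by (simp add: algebra_simps)
  ultimately show "2 / (1 + s / 2) = (sqrt 33 - 1) / 4"
    by (simp add: assms field_simps)
qed (simp add: assms field_simps)

theorem mainTheorem17:
  fixes M :: real and A :: "real \<Rightarrow> job list \<Rightarrow> nat \<Rightarrow> nat"
  assumes "M \<ge> 0" and "semi_online_alg M A"
  shows "competitive_ratio A \<ge> ereal ((sqrt 33 - 1) / 4)"
proof -
  define s where "s = (sqrt 33 - 3) / 2"
  have "0 < s" and "s < 2"
    using real_less_rsqrt[of 3 33] real_sqrt_less_iff[of 33 49] by (simp_all add: s_def)
  define n where "n = nat \<lceil>M * s\<rceil> + 1"
  define e where "e = s / (2 * n)"
  have "0 < n" by (simp add: n_def)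
  then have "0 < e" and ne: "real n * e = s / 2"
    using \<open>0 < s\<close> by (simp_all add: e_def)
  have "M * e < 1"
  proof -
    have "M * s \<le> nat \<lceil>M * s\<rceil>" by linarith
    then have "M * s < 2 * n" unfolding n_def by simp
    then show ?thesis by (simp add: e_def n_def field_simps)
  qed
  then have "ereal (min ((1 + 2 * real n * e) / 2) (2 / (1 + n * e))) \<le> competitive_ratio A"
    using competitive_ratio_ge_min[OF assms(2)] \<open>0 < e\<close> ne \<open>s < 2\<close> by simp
  moreover have "2 * real n * e = s"
    using ne by simp
  ultimately show ?thesis
    unfolding ne by (simp add: sqrt_33_balance[OF s_def])
qed

end
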